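(* Let $m\ge 2$. Let $X_1,\dots,X_m\in\mathbb{C}^n$ with $X_i=(x_{i,1},\dots,x_{i,n})$, and let $\alpha_1,\dots,\alpha_m\in\mathbb{Z}_{\ge0}^n$ with $\alpha_j=(\alpha_{j,1},\dots,\alpha_{j,n})$. Put $X_i^{\alpha_j}=x_{i,1}^{\alpha_{j,1}}x_{i,2}^{\alpha_{j,2}}\cdots x_{i,n}^{\alpha_{j,n}}$ and let $V_m=\det\big(X_i^{\alpha_j}\big)_{i,j=1}^m$ (row index $i$, column index $j$). Let $$M=\max_{i,j}|X_i^{\alpha_j}|,\qquad B=\max_{i,j,k}\Big\{|X_i^{\alpha_j}-X_i^{\alpha_k}|,\ |X_j^{\alpha_i}-X_k^{\alpha_i}|\Big\},$$ where all indices range over $1,\dots,m$. Then $|V_m|\le m!\,M^{m-1}B$.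
   Context: $V_m$ is called a generalized Vandermonde determinant. *)

theory Defs
  imports Complex_Main "Jordan_Normal_Form.Determinant"
begin

(* Points X_1..X_m in C^n are given as X :: nat => nat => complex with
   X i k = x_{i+1,k+1} (0-based, i < m, k < n);
   exponents alpha_1..alpha_m in Z_{>=0}^n as alpha :: nat => nat => nat. *)

definition monom :: "nat \<Rightarrow> (nat \<Rightarrow> complex) \<Rightarrow> (nat \<Rightarrow> nat) \<Rightarrow> complex" where
  "monom n x a = (\<Prod>k<n. x k ^ a k)"

definition gen_vandermonde_mat ::
  "nat \<Rightarrow> nat \<Rightarrow> (nat \<Rightarrow> nat \<Rightarrow> complex) \<Rightarrow> (nat \<Rightarrow> nat \<Rightarrow> nat) \<Rightarrow> complex mat" where
  "gen_vandermonde_mat m n X alpha = mat m m (\<lambda>(i, j). monom n (X i) (alpha j))"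

definition gen_vandermonde ::
  "nat \<Rightarrow> nat \<Rightarrow> (nat \<Rightarrow> nat \<Rightarrow> complex) \<Rightarrow> (nat \<Rightarrow> nat \<Rightarrow> nat) \<Rightarrow> complex" where
  "gen_vandermonde m n X alpha = det (gen_vandermonde_mat m n X alpha)"

definition bound_M ::
  "nat \<Rightarrow> nat \<Rightarrow> (nat \<Rightarrow> nat \<Rightarrow> complex) \<Rightarrow> (nat \<Rightarrow> nat \<Rightarrow> nat) \<Rightarrow> real" where
  "bound_M m n X alpha = Max {cmod (monom n (X i) (alpha j)) | i j. i < m \<and> j < m}"

definition bound_B ::
  "nat \<Rightarrow> nat \<Rightarrow> (nat \<Rightarrow> nat \<Rightarrow> complex) \<Rightarrow> (nat \<Rightarrow> nat \<Rightarrow> nat) \<Rightarrow> real" where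
  "bound_B m n X alpha = Max ({cmod (monom n (X i) (alpha j) - monom n (X i) (alpha k)) | i j k. i < m \<and> j < m \<and> k < m}
       \<union> {cmod (monom n (X j) (alpha i) - monom n (X k) (alpha i)) | i j k. i < m \<and> j < m \<and> k < m})"

end

theory Submission
  imports Defs "Jordan_Normal_Form.Column_Operations"
begin

(* Subtracting the second column from the first leaves the determinant unchanged and turns
   the first column into differences X_i^alpha_1 - X_i^alpha_2, each bounded by B; every other
   entry is bounded by M. Expanding the determinant over the m! permutations, each term picks
   exactly one entry of the first column, so it is at most M^(m-1) B. *)

lemma norm_det_le_fact_mult_prod_col_bound:
  fixes A :: "'a :: real_normed_field mat"
  assumes A: "A \<in> carrier_mat n n"
    and bound: "\<And>i j. i < n \<Longrightarrow> j < n \<Longrightarrow> norm (A $$ (i, j)) \<le> c j"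
  shows "norm (det A) \<le> fact n * (\<Prod>j<n. c j)"
proof -
  have term_bound: "(\<Prod>i<n. norm (A $$ (i, p i))) \<le> (\<Prod>j<n. c j)" if p: "p permutes {..<n}" for p
  proof -
    have "p i < n" if "i < n" for i
      using permutes_in_image[OF p] that by simp
    then have "(\<Prod>i<n. norm (A $$ (i, p i))) \<le> (\<Prod>i<n. c (p i))"
      by (intro prod_mono) (simp add: bound)
    also have "\<dots> = (\<Prod>j<n. c j)"
      using prod.permute[OF p, of c] by (simp add: comp_def)
    finally show ?thesis .
  qed
  have "norm (det A) \<le> (\<Sum>p | p permutes {..<n}. norm (signof p * (\<Prod>i<n. A $$ (i, p i))))"
    unfolding det_def'[OF A] atLeast0LessThan by (rule norm_sum)
  also have "\<dots> = (\<Sum>p | p permutes {..<n}. \<Prod>i<n. norm (A $$ (i, p i)))"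
    by (intro sum.cong refl) (simp add: sign_def norm_mult prod_norm)
  also have "\<dots> \<le> (\<Sum>p | p permutes {..<n}. \<Prod>j<n. c j)"
    by (intro sum_mono term_bound) simp
  also have "\<dots> = fact n * (\<Prod>j<n. c j)"
    by (simp add: card_permutations)
  finally show ?thesis .
qed

lemma finite_image_set3_lessThan: "finite {f i j k | i j k. i < (m::nat) \<and> j < m \<and> k < m}"
proof -
  have "{f i j k | i j k. i < m \<and> j < m \<and> k < m}
          = (\<lambda>(i, j, k). f i j k) ` ({..<m} \<times> {..<m} \<times> {..<m})"
    by (auto simp: image_def)
  then show ?thesis by simp
qed

lemma norm_monom_le_bound_M:
  assumes "i < m" "j < m"
  shows "cmod (monom n (X i) (alpha j)) \<le> bound_M m n X alpha"
  unfolding bound_M_def using assms by (intro Max_ge finite_image_set2) auto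

lemma norm_monom_diff_le_bound_B:
  assumes "i < m" "j < m" "k < m"
  shows "cmod (monom n (X i) (alpha j) - monom n (X i) (alpha k)) \<le> bound_B m n X alpha"
  unfolding bound_B_def using assms by (intro Max_ge) (auto simp: finite_image_set3_lessThan)

theorem theorem2:
  fixes m n :: nat and X :: "nat \<Rightarrow> nat \<Rightarrow> complex" and alpha :: "nat \<Rightarrow> nat \<Rightarrow> nat"
  assumes "m \<ge> 2"
  shows "cmod (gen_vandermonde m n X alpha)
           \<le> fact m * bound_M m n X alpha ^ (m - 1) * bound_B m n X alpha"
proof -
  let ?M = "bound_M m n X alpha" and ?B = "bound_B m n X alpha"
  define A where "A = gen_vandermonde_mat m n X alpha"
  define C where "C = addcol (-1) 0 1 A"
  have A: "A \<in> carrier_mat m m"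
    by (simp add: A_def gen_vandermonde_mat_def)
  have C: "C \<in> carrier_mat m m"
    using A by (auto simp: C_def)
  have "gen_vandermonde m n X alpha = det C"
    unfolding gen_vandermonde_def A_def[symmetric] C_def
    using A assms by (intro det_addcol[symmetric]) auto
  also have "cmod (det C) \<le> fact m * (\<Prod>j<m. if j = 0 then ?B else ?M)"
  proof (rule norm_det_le_fact_mult_prod_col_bound[OF C])
    fix i j assume "i < m" "j < m"
    then show "cmod (C $$ (i, j)) \<le> (if j = 0 then ?B else ?M)"
      using A assms norm_monom_diff_le_bound_B[of i m 0 1] norm_monom_le_bound_M[of i m j]
      by (auto simp: C_def A_def gen_vandermonde_mat_def)
  qed
  also have "(\<Prod>j<m. if j = 0 then ?B else ?M) = ?M ^ (m - 1) * ?B"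
    using assms by (cases m) (simp_all del: prod.lessThan_Suc add: prod.lessThan_Suc_shift)
  finally show ?thesis
    by (simp add: mult.assoc)
qed

end
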